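(* Let $(H,h)$ be an equivariant pair. Suppose $\{(H_n,h_n)\}$ is a sequence derived from $(H,h)$, and there are three distinct points $a,b,c \in S$ such that the sequences $\{h_n(a)\}$, $\{h_n(b)\}$, $\{h_n(c)\}$ converge to three distinct points of $S$. Then $\{(H_n,h_n)\}$ is tame, i.e. for every $p\in\mathbb{H}^3$ the sequence $\{H_n(p)\}$ is bounded in $\mathbb{H}^3$.
   Context: $\mathbb{H}^3$ is the upper half space model $\mathbb{C}\times(0,\infty)$ of hyperbolic $3$-space, with ideal boundary the Riemann sphere $S=\mathbb{C}\cup\{\infty\}$; $\mathcal{I}$ is the isometry group of $\mathbb{H}^3$, and each element of $\mathcal{I}$ extends to a conformal transformation of $S$ (every conformal transformation of $S$ arises this way), so $\mathcal{I}$ acts on $\mathbb{H}^3\cup S$. A nice lattice is a subgroup $\Gamma\subset\mathcal{I}$ acting freely, properly discontinuously and cocompactly on $\mathbb{H}^3$. A map $H:\mathbb{H}^3\to\mathbb{H}^3$ is $K$-bi-Lipschitz if it is a bijection with $K^{-1}d(x,y)\le d(H(x),H(y))\le Kd(x,y)$. An equivariant pair $(H,h)$ consists of a bi-Lipschitz map $H:\mathbb{H}^3\to\mathbb{H}^3$ and a homeomorphism $h:S\to S$ such that $H\cup h$ is continuous on $\mathbb{H}^3\cup S$ (i.e. $h$ is the continuous extension of $H$), together with nice lattices $\Gamma_1,\Gamma_2$ such that $H\Gamma_1H^{-1}=\Gamma_2$ and $h\Gamma_1h^{-1}=\Gamma_2$. A sequence $\{(H_n,h_n)\}$ is derived from $(H,h)$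 if for each $n$ there are $f_n,g_n\in\mathcal{I}$ with $H_n=f_nHg_n$ and $h_n=f_nhg_n$. *)

theory Defs
  imports "HOL-Analysis.Analysis"
begin

text \<open>Upper half-space model: points (z,t) with z complex, t > 0.\<close>
type_synonym pt = "complex \<times> real"

definition H3 :: "pt set" where
  "H3 = {p. snd p > 0}"

definition hdist :: "pt \<Rightarrow> pt \<Rightarrow> real" where
  "hdist p q = arcosh (1 + ((cmod (fst p - fst q))\<^sup>2 + (snd p - snd q)\<^sup>2)
                          / (2 * snd p * snd q))"

text \<open>Riemann sphere S = C \<union> {\<infinity>}: None is \<infinity>.\<close>
type_synonym sphere = "complex option"

text \<open>Cayley embedding of the closed upper half-space (with \<infinity>) onto the closed
  unit ball of R^3 = C \<times> R; it defines the topology of H^3 \<union> S.\<close>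
definition cayley :: "pt \<Rightarrow> pt" where
  "cayley p = (let N = (cmod (fst p))\<^sup>2 + (snd p + 1)\<^sup>2
               in (2 * fst p / complex_of_real N, 2 * (snd p + 1) / N - 1))"

definition emb_S :: "sphere \<Rightarrow> pt" where
  "emb_S \<xi> = (case \<xi> of None \<Rightarrow> (0, -1) | Some z \<Rightarrow> cayley (z, 0))"

type_synonym clpt = "pt + sphere"

definition cl_emb :: "clpt \<Rightarrow> pt" where
  "cl_emb x = (case x of Inl p \<Rightarrow> cayley p | Inr \<xi> \<Rightarrow> emb_S \<xi>)"

definition cl_space :: "clpt set" where
  "cl_space = Inl ` H3 \<union> range Inr"

definition cl_top :: "clpt topology" where
  "cl_top = pullback_topology cl_space cl_emb euclidean"

definition pair_map :: "(pt \<Rightarrow> pt) \<Rightarrow> (sphere \<Rightarrow> sphere) \<Rightarrow> clpt \<Rightarrow> clpt" where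
  "pair_map H h x = (case x of Inl p \<Rightarrow> Inl (H p) | Inr \<xi> \<Rightarrow> Inr (h \<xi>))"

definition S_conv :: "(nat \<Rightarrow> sphere) \<Rightarrow> sphere \<Rightarrow> bool" where
  "S_conv xs \<xi> \<longleftrightarrow> ((\<lambda>n. emb_S (xs n)) \<longlonglongrightarrow> emb_S \<xi>)"

text \<open>The isometry group \<I>: an isometry G of H^3 (normalized to be the identity
  off H^3) together with its extension g to S, G \<union> g continuous on H^3 \<union> S.\<close>
definition Isom :: "((pt \<Rightarrow> pt) \<times> (sphere \<Rightarrow> sphere)) set" where
  "Isom = {(G, g). bij_betw G H3 H3 \<and> (\<forall>x. x \<notin> H3 \<longrightarrow> G x = x)
              \<and> (\<forall>p\<in>H3. \<forall>q\<in>H3. hdist (G p) (G q) = hdist p q)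
              \<and> bij g \<and> continuous_map cl_top cl_top (pair_map G g)}"

definition bi_lipschitz :: "real \<Rightarrow> (pt \<Rightarrow> pt) \<Rightarrow> bool" where
  "bi_lipschitz K H \<longleftrightarrow> K > 0 \<and> bij_betw H H3 H3 \<and>
     (\<forall>x\<in>H3. \<forall>y\<in>H3. hdist x y / K \<le> hdist (H x) (H y) \<and> hdist (H x) (H y) \<le> K * hdist x y)"

definition nice_lattice :: "((pt \<Rightarrow> pt) \<times> (sphere \<Rightarrow> sphere)) set \<Rightarrow> bool" where
  "nice_lattice \<Gamma> \<longleftrightarrow>
     \<Gamma> \<subseteq> Isom \<and> (id, id) \<in> \<Gamma>
     \<and> (\<forall>(G1, g1)\<in>\<Gamma>. \<forall>(G2, g2)\<in>\<Gamma>. (G1 \<circ> G2, g1 \<circ> g2) \<in> \<Gamma>)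
     \<and> (\<forall>(G, g)\<in>\<Gamma>. (inv G, inv g) \<in> \<Gamma>)
     \<comment> \<open>free action\<close>
     \<and> (\<forall>(G, g)\<in>\<Gamma>. (\<exists>p\<in>H3. G p = p) \<longrightarrow> (G, g) = (id, id))
     \<comment> \<open>properly discontinuous\<close>
     \<and> (\<forall>K. K \<subseteq> H3 \<and> compact K \<longrightarrow> finite {\<gamma>\<in>\<Gamma>. fst \<gamma> ` K \<inter> K \<noteq> {}})
     \<comment> \<open>cocompact\<close>
     \<and> (\<exists>K. K \<subseteq> H3 \<and> compact K \<and> (\<Union>\<gamma>\<in>\<Gamma>. fst \<gamma> ` K) = H3)"

definition equivariant_pair :: "(pt \<Rightarrow> pt) \<Rightarrow> (sphere \<Rightarrow> sphere) \<Rightarrow> bool" where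
  "equivariant_pair H h \<longleftrightarrow>
     (\<exists>K. bi_lipschitz K H) \<and> bij h \<and>
     continuous_map cl_top cl_top (pair_map H h) \<and>
     (\<exists>\<Gamma>1 \<Gamma>2. nice_lattice \<Gamma>1 \<and> nice_lattice \<Gamma>2 \<and>
        (\<lambda>G. \<lambda>p. if p \<in> H3 then H (G (inv_into H3 H p)) else p) ` (fst ` \<Gamma>1) = fst ` \<Gamma>2 \<and>
        (\<lambda>g. h \<circ> g \<circ> inv h) ` (snd ` \<Gamma>1) = snd ` \<Gamma>2)"

definition derived :: "(nat \<Rightarrow> pt \<Rightarrow> pt) \<Rightarrow> (nat \<Rightarrow> sphere \<Rightarrow> sphere)
                        \<Rightarrow> (pt \<Rightarrow> pt) \<Rightarrow> (sphere \<Rightarrow> sphere) \<Rightarrow> bool" where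
  "derived Hs hs H h \<longleftrightarrow> (\<forall>n. \<exists>f\<in>Isom. \<exists>g\<in>Isom.
      (\<forall>p\<in>H3. Hs n p = fst f (H (fst g p))) \<and> hs n = snd f \<circ> h \<circ> snd g)"

definition tame :: "(nat \<Rightarrow> pt \<Rightarrow> pt) \<Rightarrow> bool" where
  "tame Hs \<longleftrightarrow> (\<forall>p\<in>H3. \<exists>R. \<forall>n. Hs n p \<in> H3 \<and> hdist (Hs n p) p \<le> R)"

end

theory Submission
  imports Defs
begin

text \<open>Work in the ball model, reached by the Cayley transform. For boundary points
  \<open>X \<noteq> Y\<close> and an interior point \<open>P\<close>, the geodesic gauge (a function of the hyperbolic
  distance from \<open>P\<close> to the geodesic \<open>XY\<close>) is invariant under isometries, being a limit of
  isometry invariants of three interior points. Writing \<open>H\<^sub>n = f H g\<close> with isometries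
  \<open>f\<close>, \<open>g\<close>, cocompactness of the lattice and equivariance of \<open>H\<close> turn the gauge of
  \<open>(h\<^sub>n a, h\<^sub>n b, H\<^sub>n p)\<close> into a gauge of \<open>(h x, h y, H k)\<close> with \<open>k\<close> in a fixed compact
  set and \<open>(x, y, k)\<close> on a fixed positive level set of the gauge; continuity of \<open>H \<union> h\<close>
  on the closed ball bounds these values. So \<open>H\<^sub>n p\<close> stays at bounded distance from the
  three geodesics joining \<open>h\<^sub>n a\<close>, \<open>h\<^sub>n b\<close>, \<open>h\<^sub>n c\<close>, whose endpoints stay uniformly apart,
  and this confines \<open>H\<^sub>n p\<close> to a compact part of \<open>H\<^sup>3\<close>.\<close>

section \<open>The ball model\<close>

definition ball_defect :: "pt \<Rightarrow> real" where
  "ball_defect P = 1 - (norm P)\<^sup>2"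

text \<open>In the ball model, \<open>cosh d(P, Q) = 1 + 2 * ball_delta P Q\<close>.\<close>
definition ball_delta :: "pt \<Rightarrow> pt \<Rightarrow> real" where
  "ball_delta P Q = (norm (P - Q))\<^sup>2 / (ball_defect P * ball_defect Q)"

definition sphere_inversion :: "pt \<Rightarrow> pt" where
  "sphere_inversion x = (2 / (norm x)\<^sup>2) *\<^sub>R x"

abbreviation j_pt :: pt where
  "j_pt \<equiv> (0, 1)"

lemma norm_pt_squared: "(norm (p :: pt))\<^sup>2 = (cmod (fst p))\<^sup>2 + (snd p)\<^sup>2"
  by (cases p) (simp add: norm_Pair)

lemma cayley_eq_sphere_inversion: "cayley p = sphere_inversion (p + j_pt) - j_pt"
proof (cases p)
  case (Pair z t)
  then have "(norm (p + j_pt))\<^sup>2 = (cmod z)\<^sup>2 + (t + 1)\<^sup>2"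
    by (simp add: norm_pt_squared)
  with Pair show ?thesis
    unfolding cayley_def sphere_inversion_def Let_def by (simp add: scaleR_conv_of_real field_simps)
qed

lemma norm_sphere_inversion_diff:
  assumes "x \<noteq> 0" "y \<noteq> 0"
  shows "(norm (sphere_inversion x - sphere_inversion y))\<^sup>2
           = 4 * (norm (x - y))\<^sup>2 / ((norm x)\<^sup>2 * (norm y)\<^sup>2)"
  using assms unfolding sphere_inversion_def power2_norm_eq_inner
  by (simp add: inner_diff_left inner_diff_right inner_commute field_simps power2_eq_square)

lemma inj_on_sphere_inversion: "inj_on sphere_inversion (- {0})"
proof (rule inj_onI)
  fix x y assume "x \<in> - {0}" "y \<in> - {0}" "sphere_inversion x = sphere_inversion y"
  then show "x = y"
    using norm_sphere_inversion_diff[of x y] by (simp add: field_simps)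
qed

lemma add_j_pt_nonzero: "snd p \<ge> 0 \<Longrightarrow> p + j_pt \<noteq> 0"
  by (cases p) (auto simp: zero_prod_def)

lemma ball_defect_cayley:
  assumes "snd p \<ge> 0"
  shows "ball_defect (cayley p) = 4 * snd p / (norm (p + j_pt))\<^sup>2"
proof -
  define x where "x = p + j_pt"
  define s where "s = 2 / (norm x)\<^sup>2"
  have x0: "(norm x)\<^sup>2 > 0"
    using add_j_pt_nonzero[OF assms] by (simp add: x_def)
  have xj: "x \<bullet> j_pt = snd p + 1"
    unfolding x_def by (cases p) simp
  have xx: "x \<bullet> x = (norm x)\<^sup>2"
    by (simp add: power2_norm_eq_inner)
  have "(norm (cayley p))\<^sup>2 = s * s * (x \<bullet> x) - 2 * s * (x \<bullet> j_pt) + 1"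
    unfolding cayley_eq_sphere_inversion sphere_inversion_def x_def[symmetric] s_def[symmetric]
    unfolding power2_norm_eq_inner
    by (simp add: inner_diff_left inner_diff_right inner_commute algebra_simps)
  also have "\<dots> = 4 / (norm x)\<^sup>2 - 4 * (snd p + 1) / (norm x)\<^sup>2 + 1"
    unfolding xx xj s_def using x0 by (simp add: field_simps power2_eq_square)
  finally show ?thesis
    using x0 unfolding ball_defect_def x_def[symmetric] by (simp add: field_simps)
qed

lemma ball_defect_cayley_pos: "p \<in> H3 \<Longrightarrow> ball_defect (cayley p) > 0"
  using ball_defect_cayley[of p] add_j_pt_nonzero[of p] by (simp add: H3_def)

lemma norm_cayley_less_1: "p \<in> H3 \<Longrightarrow> norm (cayley p) < 1"
  using ball_defect_cayley_pos[of p] by (simp add: ball_defect_def abs_square_less_1)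

lemma ball_delta_cayley:
  assumes "snd p > 0" "snd q > 0"
  shows "ball_delta (cayley p) (cayley q) = (norm (p - q))\<^sup>2 / (4 * snd p * snd q)"
proof -
  define x y where "x = p + j_pt" and "y = q + j_pt"
  have nz: "(norm x)\<^sup>2 > 0" "(norm y)\<^sup>2 > 0"
    using add_j_pt_nonzero assms by (auto simp: x_def y_def)
  have nc: "(norm (cayley p - cayley q))\<^sup>2 = 4 * (norm (p - q))\<^sup>2 / ((norm x)\<^sup>2 * (norm y)\<^sup>2)"
    using norm_sphere_inversion_diff[of x y] nz
    unfolding cayley_eq_sphere_inversion x_def y_def by simp
  have dp: "ball_defect (cayley p) = 4 * snd p / (norm x)\<^sup>2"
    and dq: "ball_defect (cayley q) = 4 * snd q / (norm y)\<^sup>2"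
    using ball_defect_cayley assms by (auto simp: x_def y_def)
  show ?thesis
    unfolding ball_delta_def nc dp dq using nz assms by (simp add: field_simps)
qed

lemma hdist_eq_arcosh_ball_delta:
  assumes "p \<in> H3" "q \<in> H3"
  shows "hdist p q = arcosh (1 + 2 * ball_delta (cayley p) (cayley q))"
proof -
  have "snd p > 0" "snd q > 0"
    using assms by (auto simp: H3_def)
  then show ?thesis
    unfolding hdist_def ball_delta_cayley[OF \<open>snd p > 0\<close> \<open>snd q > 0\<close>] norm_pt_squared
    by (intro arg_cong[of _ _ arcosh]) (simp add: field_simps)
qed

lemma ball_delta_cayley_nonneg: "p \<in> H3 \<Longrightarrow> q \<in> H3 \<Longrightarrow> ball_delta (cayley p) (cayley q) \<ge> 0"
  using ball_defect_cayley_pos unfolding ball_delta_def by (simp add: divide_nonneg_pos)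

lemma ball_delta_cayley_eq_cosh_hdist:
  assumes "p \<in> H3" "q \<in> H3"
  shows "ball_delta (cayley p) (cayley q) = (cosh (hdist p q) - 1) / 2"
  using hdist_eq_arcosh_ball_delta[OF assms] ball_delta_cayley_nonneg[OF assms] by simp

lemma ball_defect_emb_S: "ball_defect (emb_S \<xi>) = 0"
  using ball_defect_cayley[of "(the \<xi>, 0)"]
  by (cases \<xi>) (simp_all add: emb_S_def ball_defect_def norm_Pair)

lemma norm_emb_S: "norm (emb_S \<xi>) = 1"
  using ball_defect_emb_S[of \<xi>] by (simp add: ball_defect_def abs_square_eq_1)

lemma inj_emb_S: "inj emb_S"
proof -
  have j_pt_nonzero: "(z, 0) + j_pt \<noteq> 0" for z
    using add_j_pt_nonzero[of "(z, 0)"] by simp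
  have not_south: "cayley (z, 0) \<noteq> (0, -1)" for z
  proof
    assume "cayley (z, 0) = (0, -1)"
    then have "sphere_inversion ((z, 0) + j_pt) = (0, -1) + j_pt"
      unfolding cayley_eq_sphere_inversion by (metis diff_add_cancel)
    then have "sphere_inversion ((z, 0) + j_pt) = 0"
      by (simp add: zero_prod_def)
    with j_pt_nonzero[of z] show False
      unfolding sphere_inversion_def by (metis divide_eq_0_iff power_eq_0_iff norm_eq_zero
        scaleR_eq_0_iff zero_neq_numeral)
  qed
  have cayley_inj: "cayley (z, 0) = cayley (w, 0) \<Longrightarrow> z = w" for z w
    using inj_onD[OF inj_on_sphere_inversion, of "(z, 0) + j_pt" "(w, 0) + j_pt"] j_pt_nonzero
    unfolding cayley_eq_sphere_inversion by simp
  show ?thesis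
  proof (rule injI)
    fix \<xi> \<eta> assume "emb_S \<xi> = emb_S \<eta>"
    with not_south cayley_inj show "\<xi> = \<eta>"
      by (cases \<xi>; cases \<eta>) (auto simp: emb_S_def dest: sym)
  qed
qed

lemma range_emb_S: "range emb_S = sphere 0 1"
proof
  show "range emb_S \<subseteq> sphere 0 1"
    using norm_emb_S by auto
next
  show "sphere 0 1 \<subseteq> range emb_S"
  proof
    fix X :: pt assume "X \<in> sphere 0 1"
    obtain w s where X: "X = (w, s)" by (cases X)
    with \<open>X \<in> sphere 0 1\<close> have ws: "(cmod w)\<^sup>2 + s\<^sup>2 = 1"
      using norm_pt_squared[of X] by simp
    show "X \<in> range emb_S"
    proof (cases "s = -1")
      case True
      with ws X show ?thesis
        by (auto simp: emb_S_def intro!: range_eqI[of _ _ None])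
    next
      case False
      have "s\<^sup>2 \<le> 1"
        using ws by (smt (verit) zero_le_power2)
      then have "\<bar>s\<bar> \<le> 1"
        by (simp add: abs_square_le_1)
      with False have s1: "1 + s > 0"
        by linarith
      \<comment> \<open>Stereographic projection from the south pole.\<close>
      define z where "z = w / complex_of_real (1 + s)"
      have "cmod (complex_of_real (1 + s)) = 1 + s"
        using s1 unfolding norm_of_real by simp
      then have "(cmod z)\<^sup>2 = (cmod w)\<^sup>2 / (1 + s)\<^sup>2"
        by (simp only: z_def norm_divide power_divide)
      also have "\<dots> = (1 - s) * (1 + s) / ((1 + s) * (1 + s))"
        using ws by (simp add: power2_eq_square algebra_simps)
      also have "\<dots> = (1 - s) / (1 + s)"
        using s1 by simp
      finally have N: "(cmod z)\<^sup>2 + (0 + 1)\<^sup>2 = 2 / (1 + s)"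
        using s1 by (simp add: field_simps)
      have nz: "1 + complex_of_real s \<noteq> 0"
        by (metis s1 of_real_1 of_real_add of_real_eq_0_iff less_irrefl)
      then have "2 + complex_of_real s * 2 \<noteq> 0"
        by (metis distrib_left mult.commute mult_1 mult_eq_0_iff zero_neq_numeral)
      with nz have "2 * z / complex_of_real (2 / (1 + s)) = w"
        by (simp add: z_def field_simps)
      moreover have "2 * (0 + 1) / (2 / (1 + s)) - 1 = s"
        using s1 by (simp add: field_simps)
      ultimately have "cayley (z, 0) = X"
        unfolding cayley_def Let_def fst_conv snd_conv N X by simp
      then show ?thesis
        by (auto simp: emb_S_def intro!: range_eqI[of _ _ "Some z"])
    qed
  qed
qed

section \<open>Convergence in the closed ball\<close>

lemma limitin_pullback_euclidean:
  "limitin (pullback_topology A f euclidean) s l F \<longleftrightarrow>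
     l \<in> A \<and> eventually (\<lambda>x. s x \<in> A) F \<and> ((\<lambda>x. f (s x)) \<longlongrightarrow> f l) F"
proof
  assume L: "limitin (pullback_topology A f euclidean) s l F"
  have lA: "l \<in> A"
    using L unfolding limitin_def topspace_pullback_topology by auto
  have "openin (pullback_topology A f euclidean) A"
    unfolding openin_pullback_topology by (intro exI[of _ UNIV]) auto
  with L lA have evA: "eventually (\<lambda>x. s x \<in> A) F"
    unfolding limitin_def by auto
  have "((\<lambda>x. f (s x)) \<longlongrightarrow> f l) F"
  proof (rule topological_tendstoI)
    fix V assume V: "open V" "f l \<in> V"
    then have "openin (pullback_topology A f euclidean) (f -` V \<inter> A)"
      unfolding openin_pullback_topology by auto
    with L V lA have "eventually (\<lambda>x. s x \<in> f -` V \<inter> A) F"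
      unfolding limitin_def by auto
    then show "eventually (\<lambda>x. f (s x) \<in> V) F"
      by (rule eventually_mono) auto
  qed
  with lA evA show "l \<in> A \<and> eventually (\<lambda>x. s x \<in> A) F \<and> ((\<lambda>x. f (s x)) \<longlongrightarrow> f l) F"
    by auto
next
  assume R: "l \<in> A \<and> eventually (\<lambda>x. s x \<in> A) F \<and> ((\<lambda>x. f (s x)) \<longlongrightarrow> f l) F"
  show "limitin (pullback_topology A f euclidean) s l F"
    unfolding limitin_def topspace_pullback_topology
  proof (intro conjI allI impI)
    show "l \<in> f -` topspace euclidean \<inter> A"
      using R by auto
    fix U assume U: "openin (pullback_topology A f euclidean) U \<and> l \<in> U"
    then obtain V where V: "open V" "U = f -` V \<inter> A"
      unfolding openin_pullback_topology by auto
    with U R have "eventually (\<lambda>x. f (s x) \<in> V \<and> s x \<in> A) F"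
      using topological_tendstoD eventually_conj by blast
    then show "eventually (\<lambda>x. s x \<in> U) F"
      unfolding V(2) by (rule eventually_mono) auto
  qed
qed

lemma Inl_in_cl_space [simp]: "Inl p \<in> cl_space \<longleftrightarrow> p \<in> H3"
  unfolding cl_space_def by auto

lemma Inr_in_cl_space [simp]: "Inr \<xi> \<in> cl_space"
  unfolding cl_space_def by auto

lemma continuous_pair_map_H3:
  assumes "continuous_map cl_top cl_top (pair_map A a)" "p \<in> H3"
  shows "A p \<in> H3"
proof -
  have "pair_map A a (Inl p) \<in> topspace cl_top"
    using continuous_map_image_subset_topspace[OF assms(1)] assms(2)
    by (auto simp: cl_top_def topspace_pullback_topology)
  then show ?thesis
    by (simp add: cl_top_def topspace_pullback_topology pair_map_def)
qed

lemma continuous_pair_map_tendsto: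
  assumes "continuous_map cl_top cl_top (pair_map A a)"
    and "\<And>j. s j \<in> cl_space" "l \<in> cl_space" "(\<lambda>j. cl_emb (s j)) \<longlonglongrightarrow> cl_emb l"
  shows "(\<lambda>j. cl_emb (pair_map A a (s j))) \<longlonglongrightarrow> cl_emb (pair_map A a l)"
  using continuous_map_limit[OF assms(1), of s l sequentially] assms(2-)
  unfolding cl_top_def limitin_pullback_euclidean by (simp add: o_def)

lemma continuous_on_cayley: "continuous_on {p. snd p \<ge> 0} cayley"
proof -
  have "(cmod (fst p))\<^sup>2 + (snd p + 1)\<^sup>2 \<noteq> 0" if "snd p \<ge> 0" for p :: pt
    using that by (smt (verit) zero_le_power2 one_le_power)
  then show ?thesis
    unfolding cayley_def Let_def
    by (intro continuous_intros) (auto simp del: of_real_add)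
qed

lemma boundary_point_approximable:
  obtains u where "\<And>j. u j \<in> H3" "(\<lambda>j. cayley (u j)) \<longlonglongrightarrow> emb_S \<xi>"
proof (cases \<xi>)
  case None
  define u where "u j = ((0::complex), real (Suc j))" for j
  have "cayley (u j) = (0, 2 * inverse (real (Suc (Suc j))) - 1)" for j
  proof -
    have e: "real (Suc j) + 1 = real (Suc (Suc j))"
      by simp
    have r: "2 * r / r\<^sup>2 = 2 * inverse r" if "r > 0" for r :: real
      using that by (simp add: power2_eq_square divide_inverse)
    show ?thesis
      unfolding cayley_def Let_def u_def fst_conv snd_conv e
      using r[of "real (Suc (Suc j))"] by simp
  qed
  moreover have "(\<lambda>j. ((0::complex), 2 * inverse (real (Suc (Suc j))) - 1)) \<longlonglongrightarrow> (0, 2 * 0 - 1)"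
    by (intro tendsto_intros LIMSEQ_Suc[OF LIMSEQ_inverse_real_of_nat])
  ultimately show ?thesis
    using None that[of u] by (simp add: u_def H3_def emb_S_def)
next
  case (Some z)
  define u where "u j = (z, inverse (real (Suc j)))" for j
  have "u \<longlonglongrightarrow> (z, 0)"
    unfolding u_def by (intro tendsto_intros LIMSEQ_inverse_real_of_nat)
  moreover have "\<forall>j. snd (u j) \<ge> 0"
    by (simp add: u_def)
  ultimately have "(\<lambda>j. cayley (u j)) \<longlonglongrightarrow> cayley (z, 0)"
    by (intro continuous_on_tendsto_compose[OF continuous_on_cayley]) auto
  then show ?thesis
    using Some that[of u] by (simp add: u_def H3_def emb_S_def)
qed

lemma continuous_pair_map_tendsto_boundary:
  assumes "continuous_map cl_top cl_top (pair_map A a)"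
    and "\<And>j. u j \<in> H3" "(\<lambda>j. cayley (u j)) \<longlonglongrightarrow> emb_S \<xi>"
  shows "(\<lambda>j. cayley (A (u j))) \<longlonglongrightarrow> emb_S (a \<xi>)"
  using continuous_pair_map_tendsto[OF assms(1), of "\<lambda>j. Inl (u j)" "Inr \<xi>"] assms(2,3)
  by (simp add: cl_emb_def pair_map_def)

section \<open>The geodesic gauge\<close>

text \<open>For boundary points \<open>X \<noteq> Y\<close> and an interior point \<open>P\<close> of the ball,
  \<open>geodesic_gauge X Y P = cosh\<^sup>2 d / 4\<close>, where \<open>d\<close> is the hyperbolic distance from \<open>P\<close>
  to the geodesic with endpoints \<open>X\<close> and \<open>Y\<close>.\<close>
definition geodesic_gauge :: "pt \<Rightarrow> pt \<Rightarrow> pt \<Rightarrow> real" where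
  "geodesic_gauge X Y P =
     (norm (P - X))\<^sup>2 * (norm (P - Y))\<^sup>2 / ((ball_defect P)\<^sup>2 * (norm (X - Y))\<^sup>2)"

lemma geodesic_gauge_self [simp]: "geodesic_gauge X X P = 0"
  by (simp add: geodesic_gauge_def)

lemma geodesic_gauge_eq_ball_delta:
  assumes "ball_defect P > 0" "ball_defect U > 0" "ball_defect V > 0"
  shows "geodesic_gauge U V P = ball_delta P U * ball_delta P V / ball_delta U V"
proof (cases "U = V")
  case False
  with assms show ?thesis
    unfolding geodesic_gauge_def ball_delta_def by (simp add: field_simps power2_eq_square)
qed (simp add: ball_delta_def)

lemma geodesic_gauge_cayley_isometry_invariant:
  assumes isometry: "\<forall>p\<in>H3. \<forall>q\<in>H3. hdist (A p) (A q) = hdist p q"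
    and maps_H3: "\<And>p. p \<in> H3 \<Longrightarrow> A p \<in> H3"
    and "u \<in> H3" "v \<in> H3" "q \<in> H3"
  shows "geodesic_gauge (cayley (A u)) (cayley (A v)) (cayley (A q))
           = geodesic_gauge (cayley u) (cayley v) (cayley q)"
proof -
  have "ball_delta (cayley (A s)) (cayley (A t)) = ball_delta (cayley s) (cayley t)"
    if "s \<in> H3" "t \<in> H3" for s t
    using that isometry maps_H3 by (simp add: ball_delta_cayley_eq_cosh_hdist)
  then show ?thesis
    using geodesic_gauge_eq_ball_delta[of "cayley (A q)" "cayley (A u)" "cayley (A v)"]
      geodesic_gauge_eq_ball_delta[of "cayley q" "cayley u" "cayley v"]
      ball_defect_cayley_pos maps_H3 assms(3-) by simp
qed

lemma ball_defect_tendsto: "(f \<longlongrightarrow> P) F \<Longrightarrow> ((\<lambda>x. ball_defect (f x)) \<longlongrightarrow> ball_defect P) F"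
  unfolding ball_defect_def by (intro tendsto_intros)

lemma geodesic_gauge_tendsto:
  assumes "(X \<longlongrightarrow> X0) F" "(Y \<longlongrightarrow> Y0) F" "(P \<longlongrightarrow> P0) F" "X0 \<noteq> Y0" "ball_defect P0 \<noteq> 0"
  shows "((\<lambda>j. geodesic_gauge (X j) (Y j) (P j)) \<longlongrightarrow> geodesic_gauge X0 Y0 P0) F"
  unfolding geodesic_gauge_def using assms
  by (intro tendsto_intros ball_defect_tendsto) auto

text \<open>The gauge of two boundary points is a limit of gauges of interior points,
  by continuity of the maps on the closed ball.\<close>
lemma geodesic_gauge_boundary_eq_if_interior_eq:
  assumes cA: "continuous_map cl_top cl_top (pair_map A a)" and "inj a"
    and cB: "continuous_map cl_top cl_top (pair_map B b)" and "inj b"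
    and q: "q \<in> H3"
    and interior: "\<And>u v. u \<in> H3 \<Longrightarrow> v \<in> H3 \<Longrightarrow>
      geodesic_gauge (cayley (A u)) (cayley (A v)) (cayley (A q))
        = geodesic_gauge (cayley (B u)) (cayley (B v)) (cayley (B q))"
  shows "geodesic_gauge (emb_S (a \<xi>)) (emb_S (a \<eta>)) (cayley (A q))
           = geodesic_gauge (emb_S (b \<xi>)) (emb_S (b \<eta>)) (cayley (B q))"
proof (cases "\<xi> = \<eta>")
  case False
  obtain u where u: "\<And>j. u j \<in> H3" "(\<lambda>j. cayley (u j)) \<longlonglongrightarrow> emb_S \<xi>"
    using boundary_point_approximable[of \<xi>] by blast
  obtain v where v: "\<And>j. v j \<in> H3" "(\<lambda>j. cayley (v j)) \<longlonglongrightarrow> emb_S \<eta>"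
    using boundary_point_approximable[of \<eta>] by blast
  have lim: "(\<lambda>j. geodesic_gauge (cayley (C (u j))) (cayley (C (v j))) (cayley (C q)))
               \<longlonglongrightarrow> geodesic_gauge (emb_S (c \<xi>)) (emb_S (c \<eta>)) (cayley (C q))"
    if cC: "continuous_map cl_top cl_top (pair_map C c)" and "inj c" for C c
  proof (rule geodesic_gauge_tendsto)
    show "(\<lambda>j. cayley (C (u j))) \<longlonglongrightarrow> emb_S (c \<xi>)" "(\<lambda>j. cayley (C (v j))) \<longlonglongrightarrow> emb_S (c \<eta>)"
      using continuous_pair_map_tendsto_boundary[OF cC] u v by auto
    show "emb_S (c \<xi>) \<noteq> emb_S (c \<eta>)"
      using False \<open>inj c\<close> inj_emb_S by (simp add: inj_eq)
    show "ball_defect (cayley (C q)) \<noteq> 0"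
      using ball_defect_cayley_pos[OF continuous_pair_map_H3[OF cC q]] by simp
  qed (rule tendsto_const)
  have "(\<lambda>j. geodesic_gauge (cayley (A (u j))) (cayley (A (v j))) (cayley (A q)))
          = (\<lambda>j. geodesic_gauge (cayley (B (u j))) (cayley (B (v j))) (cayley (B q)))"
    using interior u(1) v(1) by simp
  with lim[OF cA \<open>inj a\<close>]
  have "(\<lambda>j. geodesic_gauge (cayley (B (u j))) (cayley (B (v j))) (cayley (B q)))
          \<longlonglongrightarrow> geodesic_gauge (emb_S (a \<xi>)) (emb_S (a \<eta>)) (cayley (A q))"
    by simp
  from LIMSEQ_unique[OF this lim[OF cB \<open>inj b\<close>]] show ?thesis .
qed simp

lemma Isom_maps_H3: "(G, g) \<in> Isom \<Longrightarrow> p \<in> H3 \<Longrightarrow> G p \<in> H3"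
  unfolding Isom_def by (auto intro: bij_betw_apply)

lemma geodesic_gauge_Isom_invariant:
  assumes G: "(G, g) \<in> Isom" and q: "q \<in> H3"
  shows "geodesic_gauge (emb_S (g \<xi>)) (emb_S (g \<eta>)) (cayley (G q))
           = geodesic_gauge (emb_S \<xi>) (emb_S \<eta>) (cayley q)"
proof -
  have cG: "continuous_map cl_top cl_top (pair_map G g)" and "inj g"
    and isometry: "\<forall>p\<in>H3. \<forall>q\<in>H3. hdist (G p) (G q) = hdist p q"
    using G unfolding Isom_def by (auto intro: bij_is_inj)
  have "pair_map id id = id"
    by (auto simp: pair_map_def fun_eq_iff split: sum.split)
  then have cid: "continuous_map cl_top cl_top (pair_map id id)"
    by simp
  have "geodesic_gauge (emb_S (g \<xi>)) (emb_S (g \<eta>)) (cayley (G q))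
      = geodesic_gauge (emb_S (id \<xi>)) (emb_S (id \<eta>)) (cayley (id q))"
  proof (rule geodesic_gauge_boundary_eq_if_interior_eq[OF cG \<open>inj g\<close> cid inj_on_id q])
    fix u v assume "u \<in> H3" "v \<in> H3"
    then show "geodesic_gauge (cayley (G u)) (cayley (G v)) (cayley (G q))
                 = geodesic_gauge (cayley (id u)) (cayley (id v)) (cayley (id q))"
      using geodesic_gauge_cayley_isometry_invariant[OF isometry Isom_maps_H3[OF G] _ _ q] by simp
  qed
  then show ?thesis
    by simp
qed

lemma geodesic_gauge_conjugate_invariant:
  assumes cH: "continuous_map cl_top cl_top (pair_map H h)" and "inj h"
    and G: "(G, g) \<in> Isom" and G': "(G', g') \<in> Isom"
    and conj: "\<And>u. u \<in> H3 \<Longrightarrow> G' (H u) = H (G u)"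
    and k: "k \<in> H3"
  shows "geodesic_gauge (emb_S (h (g \<xi>))) (emb_S (h (g \<eta>))) (cayley (H (G k)))
           = geodesic_gauge (emb_S (h \<xi>)) (emb_S (h \<eta>)) (cayley (H k))"
proof -
  have cG: "continuous_map cl_top cl_top (pair_map G g)" and "inj g"
    using G unfolding Isom_def by (auto intro: bij_is_inj)
  have "pair_map (H \<circ> G) (h \<circ> g) = pair_map H h \<circ> pair_map G g"
    by (auto simp: pair_map_def fun_eq_iff split: sum.split)
  with cG cH have cHG: "continuous_map cl_top cl_top (pair_map (H \<circ> G) (h \<circ> g))"
    by (metis continuous_map_compose)
  have isometry': "\<forall>p\<in>H3. \<forall>q\<in>H3. hdist (G' p) (G' q) = hdist p q"
    using G' unfolding Isom_def by auto
  have "geodesic_gauge (emb_S ((h \<circ> g) \<xi>)) (emb_S ((h \<circ> g) \<eta>)) (cayley ((H \<circ> G) k))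
          = geodesic_gauge (emb_S (h \<xi>)) (emb_S (h \<eta>)) (cayley (H k))"
  proof (rule geodesic_gauge_boundary_eq_if_interior_eq[OF cHG _ cH \<open>inj h\<close> k])
    show "inj (h \<circ> g)"
      using \<open>inj h\<close> \<open>inj g\<close> by (rule inj_compose)
    fix u v assume "u \<in> H3" "v \<in> H3"
    with k have "geodesic_gauge (cayley ((H \<circ> G) u)) (cayley ((H \<circ> G) v)) (cayley ((H \<circ> G) k))
        = geodesic_gauge (cayley (G' (H u))) (cayley (G' (H v))) (cayley (G' (H k)))"
      by (simp add: conj)
    also have "\<dots> = geodesic_gauge (cayley (H u)) (cayley (H v)) (cayley (H k))"
      using \<open>u \<in> H3\<close> \<open>v \<in> H3\<close> k continuous_pair_map_H3[OF cH]
      by (intro geodesic_gauge_cayley_isometry_invariant[OF isometry' Isom_maps_H3[OF G']])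
    finally show "geodesic_gauge (cayley ((H \<circ> G) u)) (cayley ((H \<circ> G) v)) (cayley ((H \<circ> G) k))
        = geodesic_gauge (cayley (H u)) (cayley (H v)) (cayley (H k))" .
  qed
  then show ?thesis
    by simp
qed

lemma geodesic_gauge_pos:
  assumes "p \<in> H3" "\<xi> \<noteq> \<eta>"
  shows "geodesic_gauge (emb_S \<xi>) (emb_S \<eta>) (cayley p) > 0"
proof -
  have "cayley p \<noteq> emb_S \<xi>" "cayley p \<noteq> emb_S \<eta>"
    using norm_cayley_less_1[OF assms(1)] norm_emb_S by (metis less_irrefl)+
  moreover have "emb_S \<xi> \<noteq> emb_S \<eta>"
    using assms(2) inj_emb_S by (simp add: inj_eq)
  ultimately show ?thesis
    using ball_defect_cayley_pos[OF assms(1)] by (simp add: geodesic_gauge_def)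
qed

text \<open>Clearing denominators, the level-set equation passes to the limit; if \<open>X0 = Y0\<close> it
  would force \<open>P0 = X0\<close>, which is impossible for an interior \<open>P0\<close>.\<close>
lemma geodesic_gauge_level_limit_separated:
  assumes X: "X \<longlonglongrightarrow> X0" and Y: "Y \<longlonglongrightarrow> Y0" and P: "P \<longlonglongrightarrow> P0"
    and level: "\<And>j. geodesic_gauge (X j) (Y j) (P j) = m" and "m > 0"
    and "norm P0 < 1" "norm X0 = 1"
  shows "X0 \<noteq> Y0"
proof
  assume XY: "X0 = Y0"
  have cleared: "(norm (P j - X j))\<^sup>2 * (norm (P j - Y j))\<^sup>2
                   = m * ((ball_defect (P j))\<^sup>2 * (norm (X j - Y j))\<^sup>2)" for j
  proof -
    have "(ball_defect (P j))\<^sup>2 * (norm (X j - Y j))\<^sup>2 \<noteq> 0"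
      using level[of j] \<open>m > 0\<close> by (auto simp: geodesic_gauge_def)
    with level[of j] show ?thesis
      by (simp add: geodesic_gauge_def field_simps)
  qed
  have lhs: "(\<lambda>j. (norm (P j - X j))\<^sup>2 * (norm (P j - Y j))\<^sup>2)
               \<longlonglongrightarrow> (norm (P0 - X0))\<^sup>2 * (norm (P0 - Y0))\<^sup>2"
    by (intro tendsto_intros X Y P)
  have rhs: "(\<lambda>j. m * ((ball_defect (P j))\<^sup>2 * (norm (X j - Y j))\<^sup>2))
               \<longlonglongrightarrow> m * ((ball_defect P0)\<^sup>2 * (norm (X0 - Y0))\<^sup>2)"
    by (intro tendsto_intros X Y P ball_defect_tendsto)
  have "(norm (P0 - X0))\<^sup>2 * (norm (P0 - Y0))\<^sup>2 = m * ((ball_defect P0)\<^sup>2 * (norm (X0 - Y0))\<^sup>2)"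
    using LIMSEQ_unique[OF lhs] rhs cleared by simp
  with XY have "P0 = X0"
    by simp
  with \<open>norm P0 < 1\<close> \<open>norm X0 = 1\<close> show False
    by simp
qed

section \<open>Reduction to a compact set of base points\<close>

lemma equivariant_pair_lattice:
  assumes "equivariant_pair H h"
  obtains \<Gamma> K where "\<Gamma> \<subseteq> Isom" "K \<subseteq> H3" "compact K" "(\<Union>\<gamma>\<in>\<Gamma>. fst \<gamma> ` K) = H3"
    and "\<And>G g. (G, g) \<in> \<Gamma> \<Longrightarrow> \<exists>G' g'. (G', g') \<in> Isom \<and> (\<forall>u\<in>H3. G' (H u) = H (G u))"
proof -
  obtain L where "bi_lipschitz L H"
    using assms unfolding equivariant_pair_def by auto
  then have injH: "inj_on H H3"
    unfolding bi_lipschitz_def by (auto intro: bij_betw_imp_inj_on)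
  have cH: "continuous_map cl_top cl_top (pair_map H h)"
    using assms unfolding equivariant_pair_def by auto
  obtain \<Gamma>1 \<Gamma>2 where "nice_lattice \<Gamma>1" "nice_lattice \<Gamma>2"
    and conjugate: "(\<lambda>G. \<lambda>p. if p \<in> H3 then H (G (inv_into H3 H p)) else p) ` (fst ` \<Gamma>1) = fst ` \<Gamma>2"
    using assms unfolding equivariant_pair_def by (elim conjE exE) (rule that; assumption)
  then have \<Gamma>_Isom: "\<Gamma>1 \<subseteq> Isom" "\<Gamma>2 \<subseteq> Isom"
    unfolding nice_lattice_def by auto
  obtain K where K: "K \<subseteq> H3" "compact K" "(\<Union>\<gamma>\<in>\<Gamma>1. fst \<gamma> ` K) = H3"
    using \<open>nice_lattice \<Gamma>1\<close> unfolding nice_lattice_def by auto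
  have "\<exists>G' g'. (G', g') \<in> Isom \<and> (\<forall>u\<in>H3. G' (H u) = H (G u))" if "(G, g) \<in> \<Gamma>1" for G g
  proof -
    define G' where "G' = (\<lambda>p. if p \<in> H3 then H (G (inv_into H3 H p)) else p)"
    have "G' \<in> fst ` \<Gamma>2"
      unfolding G'_def conjugate[symmetric] using that by force
    with \<Gamma>_Isom obtain g' where "(G', g') \<in> Isom"
      by force
    moreover have "\<forall>u\<in>H3. G' (H u) = H (G u)"
      using continuous_pair_map_H3[OF cH] by (simp add: G'_def inv_into_f_f[OF injH])
    ultimately show ?thesis
      by blast
  qed
  from \<Gamma>_Isom(1) K this show ?thesis
    by (rule that)
qed

text \<open>Cocompactness moves the base point into a fixed compact set; the gauge stays the
  same on both sides because lattice elements are isometries and are conjugated by \<open>H\<close>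
  into isometries.\<close>
lemma equivariant_pair_cocompact_reduction:
  assumes "equivariant_pair H h"
  obtains K where "K \<subseteq> H3" "compact K"
    and "\<And>q \<xi> \<eta>. q \<in> H3 \<Longrightarrow> \<exists>k\<in>K. \<exists>\<xi>' \<eta>'.
           geodesic_gauge (emb_S \<xi>') (emb_S \<eta>') (cayley k)
             = geodesic_gauge (emb_S \<xi>) (emb_S \<eta>) (cayley q)
         \<and> geodesic_gauge (emb_S (h \<xi>)) (emb_S (h \<eta>)) (cayley (H q))
             = geodesic_gauge (emb_S (h \<xi>')) (emb_S (h \<eta>')) (cayley (H k))"
proof -
  have "bij h" and cH: "continuous_map cl_top cl_top (pair_map H h)"
    using assms unfolding equivariant_pair_def by auto
  obtain \<Gamma> K where "\<Gamma> \<subseteq> Isom" "K \<subseteq> H3" "compact K" and cover: "(\<Union>\<gamma>\<in>\<Gamma>. fst \<gamma> ` K) = H3"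
    and conjugate: "\<And>G g. (G, g) \<in> \<Gamma> \<Longrightarrow> \<exists>G' g'. (G', g') \<in> Isom \<and> (\<forall>u\<in>H3. G' (H u) = H (G u))"
    using equivariant_pair_lattice[OF assms] by blast
  have "\<exists>k\<in>K. \<exists>\<xi>' \<eta>'.
           geodesic_gauge (emb_S \<xi>') (emb_S \<eta>') (cayley k)
             = geodesic_gauge (emb_S \<xi>) (emb_S \<eta>) (cayley q)
         \<and> geodesic_gauge (emb_S (h \<xi>)) (emb_S (h \<eta>)) (cayley (H q))
             = geodesic_gauge (emb_S (h \<xi>')) (emb_S (h \<eta>')) (cayley (H k))"
    if "q \<in> H3" for q \<xi> \<eta>
  proof -
    obtain G g k where "(G, g) \<in> \<Gamma>" and "k \<in> K" and q: "q = G k"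
      using cover \<open>q \<in> H3\<close> by fastforce
    with \<open>\<Gamma> \<subseteq> Isom\<close> \<open>K \<subseteq> H3\<close> have G: "(G, g) \<in> Isom" and k: "k \<in> H3"
      by auto
    obtain G' g' where G': "(G', g') \<in> Isom" and conj: "\<And>u. u \<in> H3 \<Longrightarrow> G' (H u) = H (G u)"
      using conjugate[OF \<open>(G, g) \<in> \<Gamma>\<close>] by blast
    have "bij g"
      using G unfolding Isom_def by auto
    then have g_inv: "g (inv g \<xi>) = \<xi>" "g (inv g \<eta>) = \<eta>"
      by (simp_all add: bij_is_surj surj_f_inv_f)
    show ?thesis
    proof (intro bexI exI conjI)
      show "geodesic_gauge (emb_S (inv g \<xi>)) (emb_S (inv g \<eta>)) (cayley k)
              = geodesic_gauge (emb_S \<xi>) (emb_S \<eta>) (cayley q)"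
        using geodesic_gauge_Isom_invariant[OF G k, of "inv g \<xi>" "inv g \<eta>"] by (simp add: g_inv q)
      show "geodesic_gauge (emb_S (h \<xi>)) (emb_S (h \<eta>)) (cayley (H q))
              = geodesic_gauge (emb_S (h (inv g \<xi>))) (emb_S (h (inv g \<eta>))) (cayley (H k))"
        using geodesic_gauge_conjugate_invariant[OF cH bij_is_inj[OF \<open>bij h\<close>] G G' conj k,
            of "inv g \<xi>" "inv g \<eta>"]
        by (simp add: g_inv q)
    qed (rule \<open>k \<in> K\<close>)
  qed
  with \<open>K \<subseteq> H3\<close> \<open>compact K\<close> show ?thesis
    by (rule that)
qed

lemma bounded_above_if_subsequences_converge:
  fixes V :: "nat \<Rightarrow> real"
  assumes "\<And>\<sigma> :: nat \<Rightarrow> nat. \<exists>r l. strict_mono r \<and> (\<lambda>j. V (\<sigma> (r j))) \<longlonglongrightarrow> l"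
  shows "\<exists>B. \<forall>n. V n \<le> B"
proof (rule ccontr)
  assume "\<nexists>B. \<forall>n. V n \<le> B"
  then have "\<forall>j::nat. \<exists>n. V n > real j"
    by (meson not_le)
  then obtain \<sigma> where \<sigma>: "\<And>j. V (\<sigma> j) > real j"
    by metis
  obtain r l where r: "strict_mono r" and "(\<lambda>j. V (\<sigma> (r j))) \<longlonglongrightarrow> l"
    using assms by blast
  then have "Bseq (\<lambda>j. V (\<sigma> (r j)))"
    by (intro convergent_imp_Bseq convergentI)
  then obtain B where B: "\<And>j. norm (V (\<sigma> (r j))) \<le> B"
    by (auto simp: Bseq_def)
  obtain j :: nat where "real j > B"
    using reals_Archimedean2 by blast
  moreover have "real j \<le> real (r j)"
    using seq_suble[OF r] by simp
  ultimately show False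
    using \<sigma>[of "r j"] B[of j] by simp
qed

text \<open>On a level set of positive level the two boundary points cannot merge in the limit.\<close>
lemma geodesic_gauge_level_set_convergent_subseq:
  fixes x y :: "nat \<Rightarrow> sphere" and k :: "nat \<Rightarrow> pt"
  assumes "compact K" "K \<subseteq> H3" and k: "\<And>n. k n \<in> K"
    and level: "\<And>n. geodesic_gauge (emb_S (x n)) (emb_S (y n)) (cayley (k n)) = m" and "m > 0"
  obtains r \<xi> \<eta> k0 where "strict_mono r" "\<xi> \<noteq> \<eta>" "k0 \<in> H3"
    "(\<lambda>j. emb_S (x (r j))) \<longlonglongrightarrow> emb_S \<xi>" "(\<lambda>j. emb_S (y (r j))) \<longlonglongrightarrow> emb_S \<eta>"
    "(\<lambda>j. cayley (k (r j))) \<longlonglongrightarrow> cayley k0"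
proof -
  define S where "S = sphere (0::pt) 1 \<times> sphere (0::pt) 1 \<times> cayley ` K"
  have "compact S"
    unfolding S_def using \<open>compact K\<close> \<open>K \<subseteq> H3\<close>
    by (intro compact_Times compact_sphere compact_continuous_image
        continuous_on_subset[OF continuous_on_cayley]) (auto simp: H3_def)
  define t where "t j = (emb_S (x j), emb_S (y j), cayley (k j))" for j
  have "\<forall>j. t j \<in> S"
    unfolding S_def t_def using k norm_emb_S by auto
  with \<open>compact S\<close> obtain l r where "l \<in> S" and r: "strict_mono r" and lim: "(t \<circ> r) \<longlonglongrightarrow> l"
    using seq_compactE[OF compact_imp_seq_compact] by blast
  obtain X Y P where l: "l = (X, Y, P)"
    by (cases l)
  with \<open>l \<in> S\<close> have "X \<in> range emb_S" "Y \<in> range emb_S" "P \<in> cayley ` K"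
    unfolding S_def range_emb_S by auto
  then obtain \<xi> \<eta> k0 where X: "X = emb_S \<xi>" and Y: "Y = emb_S \<eta>" and P: "P = cayley k0"
    and "k0 \<in> K"
    by blast
  with \<open>K \<subseteq> H3\<close> have k0: "k0 \<in> H3"
    by auto
  have lX: "(\<lambda>j. emb_S (x (r j))) \<longlonglongrightarrow> emb_S \<xi>"
    and lY: "(\<lambda>j. emb_S (y (r j))) \<longlonglongrightarrow> emb_S \<eta>"
    and lP: "(\<lambda>j. cayley (k (r j))) \<longlonglongrightarrow> cayley k0"
    using tendsto_fst[OF lim] tendsto_fst[OF tendsto_snd[OF lim]] tendsto_snd[OF tendsto_snd[OF lim]]
    by (simp_all add: t_def l X Y P o_def)
  moreover have "\<xi> \<noteq> \<eta>"
    using geodesic_gauge_level_limit_separated[OF lX lY lP level \<open>m > 0\<close>]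
      norm_cayley_less_1[OF k0] norm_emb_S by blast
  ultimately show ?thesis
    using that r k0 by blast
qed

text \<open>Since the level set over a compact set of base points is compact, the continuous
  map \<open>H \<union> h\<close> keeps the gauge bounded on it.\<close>
lemma geodesic_gauge_image_bounded:
  fixes x y :: "nat \<Rightarrow> sphere" and k :: "nat \<Rightarrow> pt"
  assumes cH: "continuous_map cl_top cl_top (pair_map H h)" and "inj h"
    and "compact K" "K \<subseteq> H3" and k: "\<And>n. k n \<in> K"
    and level: "\<And>n. geodesic_gauge (emb_S (x n)) (emb_S (y n)) (cayley (k n)) = m" and "m > 0"
  shows "\<exists>B. \<forall>n. geodesic_gauge (emb_S (h (x n))) (emb_S (h (y n))) (cayley (H (k n))) \<le> B"
proof -
  define V where "V n = geodesic_gauge (emb_S (h (x n))) (emb_S (h (y n))) (cayley (H (k n)))" for n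
  have "\<exists>r l. strict_mono r \<and> (\<lambda>j. V (\<sigma> (r j))) \<longlonglongrightarrow> l" for \<sigma> :: "nat \<Rightarrow> nat"
  proof -
    obtain r \<xi> \<eta> k0 where r: "strict_mono r" and "\<xi> \<noteq> \<eta>" and k0: "k0 \<in> H3"
      and lX: "(\<lambda>j. emb_S (x (\<sigma> (r j)))) \<longlonglongrightarrow> emb_S \<xi>"
      and lY: "(\<lambda>j. emb_S (y (\<sigma> (r j)))) \<longlonglongrightarrow> emb_S \<eta>"
      and lP: "(\<lambda>j. cayley (k (\<sigma> (r j)))) \<longlonglongrightarrow> cayley k0"
      using geodesic_gauge_level_set_convergent_subseq[where x = "\<lambda>n. x (\<sigma> n)"
          and y = "\<lambda>n. y (\<sigma> n)" and k = "\<lambda>n. k (\<sigma> n)", OF \<open>compact K\<close> \<open>K \<subseteq> H3\<close> k level \<open>m > 0\<close>]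
      by blast
    from \<open>\<xi> \<noteq> \<eta>\<close> \<open>inj h\<close> have "emb_S (h \<xi>) \<noteq> emb_S (h \<eta>)"
      by (simp add: inj_eq[OF inj_emb_S] inj_eq)
    moreover have "(\<lambda>j. emb_S (h (x (\<sigma> (r j))))) \<longlonglongrightarrow> emb_S (h \<xi>)"
      "(\<lambda>j. emb_S (h (y (\<sigma> (r j))))) \<longlonglongrightarrow> emb_S (h \<eta>)"
      using continuous_pair_map_tendsto[OF cH, of "\<lambda>j. Inr (x (\<sigma> (r j)))" "Inr \<xi>"]
        continuous_pair_map_tendsto[OF cH, of "\<lambda>j. Inr (y (\<sigma> (r j)))" "Inr \<eta>"] lX lY
      by (simp_all add: cl_emb_def pair_map_def)
    moreover have "(\<lambda>j. cayley (H (k (\<sigma> (r j))))) \<longlonglongrightarrow> cayley (H k0)"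
      using continuous_pair_map_tendsto[OF cH, of "\<lambda>j. Inl (k (\<sigma> (r j)))" "Inl k0"] lP k k0 \<open>K \<subseteq> H3\<close>
      by (auto simp: cl_emb_def pair_map_def)
    moreover have "ball_defect (cayley (H k0)) \<noteq> 0"
      using ball_defect_cayley_pos[OF continuous_pair_map_H3[OF cH k0]] by simp
    ultimately have "(\<lambda>j. V (\<sigma> (r j))) \<longlonglongrightarrow> geodesic_gauge (emb_S (h \<xi>)) (emb_S (h \<eta>)) (cayley (H k0))"
      unfolding V_def by (intro geodesic_gauge_tendsto)
    with r show ?thesis
      by blast
  qed
  then show ?thesis
    using bounded_above_if_subsequences_converge[of V] by (simp add: V_def)
qed

section \<open>Derived sequences\<close>

lemma derived_maps_H3:
  assumes "derived Hs hs H h" "continuous_map cl_top cl_top (pair_map H h)" "p \<in> H3"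
  shows "Hs n p \<in> H3"
proof -
  obtain F f G g where "(F, f) \<in> Isom" "(G, g) \<in> Isom" "Hs n p = F (H (G p))"
    using assms(1,3) unfolding derived_def by fastforce
  with assms(2,3) show ?thesis
    by (simp add: Isom_maps_H3 continuous_pair_map_H3)
qed

lemma derived_inj_boundary:
  assumes "derived Hs hs H h" "bij h"
  shows "inj (hs n)"
proof -
  obtain F f G g where "(F, f) \<in> Isom" "(G, g) \<in> Isom" "hs n = f \<circ> h \<circ> g"
    using assms(1) unfolding derived_def by fastforce
  with assms(2) show ?thesis
    unfolding Isom_def by (auto intro: bij_is_inj bij_comp)
qed

lemma derived_geodesic_gauge_bounded:
  assumes eqp: "equivariant_pair H h" and "derived Hs hs H h" and p: "p \<in> H3" and "\<xi> \<noteq> \<eta>"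
  shows "\<exists>B. \<forall>n. geodesic_gauge (emb_S (hs n \<xi>)) (emb_S (hs n \<eta>)) (cayley (Hs n p)) \<le> B"
proof -
  have "bij h" and cH: "continuous_map cl_top cl_top (pair_map H h)"
    using eqp unfolding equivariant_pair_def by auto
  obtain K where "K \<subseteq> H3" "compact K" and reduce: "\<And>q \<xi> \<eta>. q \<in> H3 \<Longrightarrow> \<exists>k\<in>K. \<exists>\<xi>' \<eta>'.
           geodesic_gauge (emb_S \<xi>') (emb_S \<eta>') (cayley k)
             = geodesic_gauge (emb_S \<xi>) (emb_S \<eta>) (cayley q)
         \<and> geodesic_gauge (emb_S (h \<xi>)) (emb_S (h \<eta>)) (cayley (H q))
             = geodesic_gauge (emb_S (h \<xi>')) (emb_S (h \<eta>')) (cayley (H k))"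
    using equivariant_pair_cocompact_reduction[OF eqp] by blast
  define m where "m = geodesic_gauge (emb_S \<xi>) (emb_S \<eta>) (cayley p)"
  have "\<exists>\<xi>' \<eta>' k. k \<in> K \<and> geodesic_gauge (emb_S \<xi>') (emb_S \<eta>') (cayley k) = m
          \<and> geodesic_gauge (emb_S (hs n \<xi>)) (emb_S (hs n \<eta>)) (cayley (Hs n p))
              = geodesic_gauge (emb_S (h \<xi>')) (emb_S (h \<eta>')) (cayley (H k))" for n
  proof -
    obtain F f G g where F: "(F, f) \<in> Isom" and G: "(G, g) \<in> Isom"
      and Hs: "Hs n p = F (H (G p))" and hs: "hs n = f \<circ> h \<circ> g"
      using \<open>derived Hs hs H h\<close> p unfolding derived_def by fastforce
    have Gp: "G p \<in> H3"
      using Isom_maps_H3[OF G p] .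
    have "geodesic_gauge (emb_S (hs n \<xi>)) (emb_S (hs n \<eta>)) (cayley (Hs n p))
            = geodesic_gauge (emb_S (h (g \<xi>))) (emb_S (h (g \<eta>))) (cayley (H (G p)))"
      unfolding Hs hs comp_apply
      by (rule geodesic_gauge_Isom_invariant[OF F continuous_pair_map_H3[OF cH Gp]])
    moreover have "geodesic_gauge (emb_S (g \<xi>)) (emb_S (g \<eta>)) (cayley (G p)) = m"
      unfolding m_def by (rule geodesic_gauge_Isom_invariant[OF G p])
    ultimately show ?thesis
      using reduce[OF Gp, of "g \<xi>" "g \<eta>"] by metis
  qed
  then obtain x y k where "\<And>n. k n \<in> K"
    and "\<And>n. geodesic_gauge (emb_S (x n)) (emb_S (y n)) (cayley (k n)) = m"
    and reduced: "\<And>n. geodesic_gauge (emb_S (hs n \<xi>)) (emb_S (hs n \<eta>)) (cayley (Hs n p))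
                        = geodesic_gauge (emb_S (h (x n))) (emb_S (h (y n))) (cayley (H (k n)))"
    by metis
  moreover have "m > 0"
    unfolding m_def using geodesic_gauge_pos[OF p \<open>\<xi> \<noteq> \<eta>\<close>] .
  ultimately show ?thesis
    unfolding reduced
    using geodesic_gauge_image_bounded[OF cH bij_is_inj[OF \<open>bij h\<close>] \<open>compact K\<close> \<open>K \<subseteq> H3\<close>]
    by blast
qed

lemma uniform_lower_bound_if_tendsto_pos:
  fixes s :: "nat \<Rightarrow> real"
  assumes pos: "\<And>n. s n > 0" and lim: "s \<longlonglongrightarrow> L" and "L > 0"
  shows "\<exists>\<delta>>0. \<forall>n. \<delta> \<le> s n"
proof -
  obtain N where N: "\<And>n. n \<ge> N \<Longrightarrow> L / 2 < s n"
    using order_tendstoD(1)[OF lim, of "L / 2"] \<open>L > 0\<close> by (auto simp: eventually_sequentially)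
  define \<delta> where "\<delta> = Min (insert (L / 2) (s ` {..<N}))"
  have "\<delta> > 0"
    unfolding \<delta>_def using \<open>L > 0\<close> pos by (subst Min_gr_iff) auto
  moreover have "\<delta> \<le> s n" for n
  proof (cases "n < N")
    case True
    then show ?thesis
      unfolding \<delta>_def by (intro Min_le) auto
  next
    case False
    moreover have "\<delta> \<le> L / 2"
      unfolding \<delta>_def by (intro Min_le) auto
    ultimately show ?thesis
      using N[of n] by linarith
  qed
  ultimately show ?thesis
    by blast
qed

lemma derived_boundary_separated:
  assumes "derived Hs hs H h" "bij h" "\<xi> \<noteq> \<eta>"
    and "S_conv (\<lambda>n. hs n \<xi>) \<alpha>" "S_conv (\<lambda>n. hs n \<eta>) \<beta>" "\<alpha> \<noteq> \<beta>"
  shows "\<exists>\<delta>>0. \<forall>n. \<delta> \<le> norm (emb_S (hs n \<xi>) - emb_S (hs n \<eta>))"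
proof (rule uniform_lower_bound_if_tendsto_pos)
  show "norm (emb_S (hs n \<xi>) - emb_S (hs n \<eta>)) > 0" for n
    using derived_inj_boundary[OF assms(1,2), of n] assms(3) by (simp add: inj_eq inj_emb_S)
  show "(\<lambda>n. norm (emb_S (hs n \<xi>) - emb_S (hs n \<eta>))) \<longlonglongrightarrow> norm (emb_S \<alpha> - emb_S \<beta>)"
    using assms(4,5) unfolding S_conv_def by (intro tendsto_intros)
  show "norm (emb_S \<alpha> - emb_S \<beta>) > 0"
    using assms(6) by (simp add: inj_eq inj_emb_S)
qed

section \<open>Bounded gauges pin down the base point\<close>

text \<open>In hyperbolic terms: the geodesic joining \<open>X n\<close> and \<open>Y n\<close> stays at bounded
  distance from \<open>W n\<close>, and its endpoints stay uniformly apart.\<close>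
definition gauge_controlled :: "(nat \<Rightarrow> pt) \<Rightarrow> (nat \<Rightarrow> pt) \<Rightarrow> (nat \<Rightarrow> pt) \<Rightarrow> bool" where
  "gauge_controlled X Y W \<longleftrightarrow>
     (\<exists>\<delta>>0. \<exists>B. \<forall>n. \<delta> \<le> norm (X n - Y n) \<and> geodesic_gauge (X n) (Y n) (W n) \<le> B)"

lemma derived_gauge_controlled:
  assumes "equivariant_pair H h" "derived Hs hs H h" "p \<in> H3" "\<xi> \<noteq> \<eta>"
    and "S_conv (\<lambda>n. hs n \<xi>) \<alpha>" "S_conv (\<lambda>n. hs n \<eta>) \<beta>" "\<alpha> \<noteq> \<beta>"
  shows "gauge_controlled (\<lambda>n. emb_S (hs n \<xi>)) (\<lambda>n. emb_S (hs n \<eta>)) (\<lambda>n. cayley (Hs n p))"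
proof -
  have "bij h"
    using assms(1) unfolding equivariant_pair_def by auto
  with assms show ?thesis
    unfolding gauge_controlled_def
    using derived_geodesic_gauge_bounded[OF assms(1-4)] derived_boundary_separated[OF assms(2) _ assms(4-)]
    by blast
qed

lemma ball_defect_lower_bound_from_pair:
  assumes "norm X \<le> 1" "norm Y \<le> 1" "X \<noteq> Y" "ball_defect W > 0"
    and gauge: "geodesic_gauge X Y W \<le> M"
    and "\<delta> > 0" "\<delta> / 2 \<le> norm (W - X)" "\<delta> / 2 \<le> norm (W - Y)"
  shows "\<delta> ^ 4 / 64 \<le> M * (ball_defect W)\<^sup>2"
proof -
  have "norm (X - Y) \<le> 2"
    using norm_triangle_ineq4[of X Y] assms(1,2) by linarith
  have den: "(ball_defect W)\<^sup>2 * (norm (X - Y))\<^sup>2 > 0"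
    using assms(3,4) by simp
  then have num: "(norm (W - X))\<^sup>2 * (norm (W - Y))\<^sup>2 \<le> M * ((ball_defect W)\<^sup>2 * (norm (X - Y))\<^sup>2)"
    using gauge unfolding geodesic_gauge_def by (simp add: pos_divide_le_eq)
  have "M \<ge> 0"
    using gauge den unfolding geodesic_gauge_def
    by (smt (verit) divide_nonneg_pos mult_nonneg_nonneg zero_le_power2)
  have "\<delta> ^ 4 / 16 = (\<delta> / 2)\<^sup>2 * (\<delta> / 2)\<^sup>2"
    by (simp add: power2_eq_square field_simps power4_eq_xxxx)
  also have "\<dots> \<le> (norm (W - X))\<^sup>2 * (norm (W - Y))\<^sup>2"
    using assms(6-) by (intro mult_mono power_mono) auto
  also have "\<dots> \<le> M * ((ball_defect W)\<^sup>2 * (norm (X - Y))\<^sup>2)"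
    by (rule num)
  also have "\<dots> \<le> M * ((ball_defect W)\<^sup>2 * 2\<^sup>2)"
    using \<open>norm (X - Y) \<le> 2\<close> \<open>M \<ge> 0\<close> by (intro mult_left_mono power_mono) auto
  finally show ?thesis
    by simp
qed

text \<open>Of three points pairwise at distance at least \<open>\<delta>\<close>, at most one lies within
  \<open>\<delta> / 2\<close> of \<open>W\<close>.\<close>
lemma ball_defect_lower_bound_from_triple:
  assumes norms: "norm X \<le> 1" "norm Y \<le> 1" "norm Z \<le> 1" and "ball_defect W > 0" and "\<delta> > 0"
    and "\<delta> \<le> norm (X - Y)" "\<delta> \<le> norm (X - Z)" "\<delta> \<le> norm (Y - Z)"
    and "geodesic_gauge X Y W \<le> M" "geodesic_gauge X Z W \<le> M" "geodesic_gauge Y Z W \<le> M"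
  shows "\<delta> ^ 4 / 64 \<le> M * (ball_defect W)\<^sup>2"
proof -
  have distinct: "X \<noteq> Y" "X \<noteq> Z" "Y \<noteq> Z"
    using assms(5-8) by auto
  have triangle: "norm (A - B) \<le> norm (W - A) + norm (W - B)" for A B :: pt
    using norm_triangle_ineq4[of "W - B" "W - A"] by (simp add: norm_minus_commute)
  consider "\<delta> / 2 \<le> norm (W - X)" "\<delta> / 2 \<le> norm (W - Y)"
    | "\<delta> / 2 \<le> norm (W - X)" "\<delta> / 2 \<le> norm (W - Z)"
    | "\<delta> / 2 \<le> norm (W - Y)" "\<delta> / 2 \<le> norm (W - Z)"
    using triangle[of X Y] triangle[of X Z] triangle[of Y Z] assms(6-8) by linarith
  then show ?thesis
    by cases (use ball_defect_lower_bound_from_pair assms distinct in blast)+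
qed

lemma ball_defect_bounded_below_if_gauge_controlled:
  assumes "gauge_controlled X Y W" "gauge_controlled X Z W" "gauge_controlled Y Z W"
    and "\<And>n. norm (X n) \<le> 1" "\<And>n. norm (Y n) \<le> 1" "\<And>n. norm (Z n) \<le> 1"
    and "\<And>n. ball_defect (W n) > 0"
  shows "\<exists>\<epsilon>>0. \<forall>n. \<epsilon> \<le> ball_defect (W n)"
proof -
  obtain \<delta>1 \<delta>2 \<delta>3 B1 B2 B3 where "\<delta>1 > 0" "\<delta>2 > 0" "\<delta>3 > 0"
    and XY: "\<And>n. \<delta>1 \<le> norm (X n - Y n) \<and> geodesic_gauge (X n) (Y n) (W n) \<le> B1"
    and XZ: "\<And>n. \<delta>2 \<le> norm (X n - Z n) \<and> geodesic_gauge (X n) (Z n) (W n) \<le> B2"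
    and YZ: "\<And>n. \<delta>3 \<le> norm (Y n - Z n) \<and> geodesic_gauge (Y n) (Z n) (W n) \<le> B3"
    using assms(1-3) unfolding gauge_controlled_def by metis
  define \<delta> where "\<delta> = min \<delta>1 (min \<delta>2 \<delta>3)"
  define M where "M = max 1 (max B1 (max B2 B3))"
  define \<epsilon> where "\<epsilon> = sqrt (\<delta> ^ 4 / 64 / M)"
  have "\<delta> > 0" "M > 0"
    unfolding \<delta>_def M_def using \<open>\<delta>1 > 0\<close> \<open>\<delta>2 > 0\<close> \<open>\<delta>3 > 0\<close> by auto
  have "\<epsilon> \<le> ball_defect (W n)" for n
  proof -
    have "\<delta> ^ 4 / 64 \<le> M * (ball_defect (W n))\<^sup>2"
      using assms(4-7) \<open>\<delta> > 0\<close> XY[of n] XZ[of n] YZ[of n]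
      by (intro ball_defect_lower_bound_from_triple[of "X n" "Y n" "Z n"]) (auto simp: \<delta>_def M_def)
    then have "\<delta> ^ 4 / 64 / M \<le> (ball_defect (W n))\<^sup>2"
      using \<open>M > 0\<close> by (simp add: field_simps)
    then show ?thesis
      unfolding \<epsilon>_def using assms(7)[of n] real_sqrt_le_mono by fastforce
  qed
  moreover have "\<epsilon> > 0"
    unfolding \<epsilon>_def using \<open>\<delta> > 0\<close> \<open>M > 0\<close> by simp
  ultimately show ?thesis
    by blast
qed

lemma hdist_le_if_ball_defect_ge:
  assumes q: "q \<in> H3" and p: "p \<in> H3" and "\<epsilon> > 0" "\<epsilon> \<le> ball_defect (cayley q)"
  shows "hdist q p \<le> arcosh (1 + 8 / (\<epsilon> * ball_defect (cayley p)))"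
proof -
  have "norm (cayley q - cayley p) \<le> 2"
    using norm_triangle_ineq4[of "cayley q" "cayley p"] norm_cayley_less_1[OF q] norm_cayley_less_1[OF p]
    by linarith
  then have "(norm (cayley q - cayley p))\<^sup>2 \<le> 2\<^sup>2"
    by (intro power_mono) auto
  moreover have "\<epsilon> * ball_defect (cayley p) \<le> ball_defect (cayley q) * ball_defect (cayley p)"
    using assms(4) ball_defect_cayley_pos[OF p] by simp
  ultimately have "ball_delta (cayley q) (cayley p) \<le> 4 / (\<epsilon> * ball_defect (cayley p))"
    unfolding ball_delta_def using \<open>\<epsilon> > 0\<close> ball_defect_cayley_pos[OF p]
    by (intro frac_le) auto
  moreover have "ball_delta (cayley q) (cayley p) \<ge> 0"
    using ball_delta_cayley_nonneg[OF q p] .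
  ultimately have "1 \<le> 1 + 2 * ball_delta (cayley q) (cayley p)"
    and "1 + 2 * ball_delta (cayley q) (cayley p) \<le> 1 + 8 / (\<epsilon> * ball_defect (cayley p))"
    by simp_all
  then show ?thesis
    unfolding hdist_eq_arcosh_ball_delta[OF q p] by (metis arcosh_less_iff_real not_less order_trans)
qed

theorem lemma1p3:
  fixes H :: "pt \<Rightarrow> pt" and h :: "sphere \<Rightarrow> sphere"
    and Hs :: "nat \<Rightarrow> pt \<Rightarrow> pt" and hs :: "nat \<Rightarrow> sphere \<Rightarrow> sphere"
    and a b c \<alpha> \<beta> \<gamma> :: sphere
  assumes "equivariant_pair H h"
    and "derived Hs hs H h"
    and "a \<noteq> b" "a \<noteq> c" "b \<noteq> c"
    and "S_conv (\<lambda>n. hs n a) \<alpha>" "S_conv (\<lambda>n. hs n b) \<beta>" "S_conv (\<lambda>n. hs n c) \<gamma>"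
    and "\<alpha> \<noteq> \<beta>" "\<alpha> \<noteq> \<gamma>" "\<beta> \<noteq> \<gamma>"
  shows "tame Hs"
  unfolding tame_def
proof
  fix p assume p: "p \<in> H3"
  have "continuous_map cl_top cl_top (pair_map H h)"
    using assms(1) unfolding equivariant_pair_def by auto
  then have Hs: "Hs n p \<in> H3" for n
    using derived_maps_H3[OF assms(2) _ p] by blast
  have ctrl: "gauge_controlled (\<lambda>n. emb_S (hs n \<xi>)) (\<lambda>n. emb_S (hs n \<eta>)) (\<lambda>n. cayley (Hs n p))"
    if "\<xi> \<noteq> \<eta>" "S_conv (\<lambda>n. hs n \<xi>) \<xi>'" "S_conv (\<lambda>n. hs n \<eta>) \<eta>'" "\<xi>' \<noteq> \<eta>'" for \<xi> \<eta> \<xi>' \<eta>'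
    using derived_gauge_controlled[OF assms(1,2) p that] .
  obtain \<epsilon> where "\<epsilon> > 0" "\<And>n. \<epsilon> \<le> ball_defect (cayley (Hs n p))"
    using ball_defect_bounded_below_if_gauge_controlled[OF ctrl[OF assms(3,6,7,9)]
        ctrl[OF assms(4,6,8,10)] ctrl[OF assms(5,7,8,11)]] norm_emb_S ball_defect_cayley_pos[OF Hs]
    by auto
  then have "hdist (Hs n p) p \<le> arcosh (1 + 8 / (\<epsilon> * ball_defect (cayley p)))" for n
    using hdist_le_if_ball_defect_ge[OF Hs p] by blast
  with Hs show "\<exists>R. \<forall>n. Hs n p \<in> H3 \<and> hdist (Hs n p) p \<le> R"
    by blast
qed

end
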